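(* Let $\mathfrak A$ be an associative $\mathcal A$-algebra with finite basis $B$ compatible with $1$, satisfying $P_1,P_2,P_3$, and let $\Phi:\mathfrak A\to\mathfrak A^\infty_{\mathcal A}=\mathcal A\otimes_{\mathbb Z}\mathfrak A^\infty$ be the $\mathcal A$-linear map $\Phi(b)=\sum_{b_1\in\mathcal D,\,b_2\in B,\,b_1\sim b_2}r^{b_2}_{b,b_1}t_{b_2}$. Make $\mathfrak A$ a left $\mathfrak A^\infty_{\mathcal A}$-module by $t_b*b'=\sum_{b''\in B}\gamma^{b''}_{b,b'}b''$. Then for all $x\in\mathfrak A$ and $b\in B$ we have $xb\equiv\Phi(x)*b\pmod{\mathfrak A_{\prec b}}$, where $\mathfrak A_{\prec b}=\bigoplus_{b'\in B,\,b'\prec b}\mathcal Ab'$.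
   Context: $\mathcal A=\mathbb Z[v,v^{-1}]$. $B$ compatible with $1$: $1=\sum_\mu 1_\mu$ with distinct $1_\mu\in B$, $1_\mu1_{\mu'}=\delta_{\mu\mu'}1_\mu$, and every $b\in B$ satisfies $1_\mu b1_{\mu'}=b$ for some $\mu,\mu'$. Write $bb'=\sum_{b''}r^{b''}_{b,b'}b''$ with $r^{b''}_{b,b'}\in\mathcal A$. $b'\preceq b$ iff $b'$ lies in every $K\subset B$ with $b\in K$ and $\sum_{b_1\in K}\mathcal Ab_1$ a two-sided ideal; $b\sim b'$ iff $b\preceq b'\preceq b$ (two-sided cells); $b'\prec b$ iff $b'\preceq b$ and $b'\not\sim b$. $a(b)$: least $m\ge0$ with $v^{-m}r^{b''}_{b,b'}\in\mathbb Z[v^{-1}]$ for all $b',b''$ in the cell of $b$. $P_1$: $a$ constant on cells. $\gamma^{b''}_{b,b'}\in\mathbb Z$: $v^{-a(b)}r^{b''}_{b,b'}\equiv\gamma^{b''}_{b,b'}\bmod v^{-1}\mathbb Z[v^{-1}]$ if $b,b',b''$ lie in one cell, $0$ otherwise; $\mathfrak A^\infty$ is the ring with $\mathbb Z$-basis $\{t_b\}$ and $t_bt_{b'}=\sum\gamma^{b''}_{b,b'}t_{b''}$. $P_2$: $\mathfrak A^\infty$ has a unit $\sum_{b\in\mathcal D}t_b$ for some $\mathcal D\subset B$ (distinguished elements), compatible with the basis. $P_3$: for $b_2\sim b_4$, $\sum_{\beta\sim b_2}r^\beta_{b_1,b_2}(v)r^{b_4}_{\beta,b_3}(v')=\sum_{\beta\sim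 b_2}r^{b_4}_{b_1,\beta}(v)r^\beta_{b_2,b_3}(v')$ with $v'$ an independent indeterminate. *)

theory Defs
  imports "HOL-Computational_Algebra.Formal_Laurent_Series"
begin

text \<open>The ring A = Z[v,v^-1] is realised as the Laurent polynomials inside the
formal Laurent series int fls (v = fls_X): series with finitely many nonzero coefficients.\<close>

definition laurent_poly :: "int fls \<Rightarrow> bool" where
  "laurent_poly f \<longleftrightarrow> (\<exists>N. \<forall>n\<ge>N. fls_nth f n = 0)"

text \<open>An algebra free over a ring with finite basis 'b is given by structure constants:
r b b' b'' is the coefficient of b'' in the product b b'.  Elements are coefficient
functions 'b => ring.\<close>

definition basis_elem :: "'b \<Rightarrow> 'b \<Rightarrow> 'a::comm_ring_1" where
  "basis_elem b = (\<lambda>b'. if b' = b then 1 else 0)"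

definition amult :: "('b::finite \<Rightarrow> 'b \<Rightarrow> 'b \<Rightarrow> 'a::comm_ring_1) \<Rightarrow> ('b \<Rightarrow> 'a) \<Rightarrow> ('b \<Rightarrow> 'a) \<Rightarrow> ('b \<Rightarrow> 'a)" where
  "amult r x y = (\<lambda>b''. \<Sum>b\<in>UNIV. \<Sum>b'\<in>UNIV. x b * y b' * r b b' b'')"

definition assoc_alg :: "('b::finite \<Rightarrow> 'b \<Rightarrow> 'b \<Rightarrow> 'a::comm_ring_1) \<Rightarrow> bool" where
  "assoc_alg r \<longleftrightarrow> (\<forall>x y z. amult r (amult r x y) z = amult r x (amult r y z))"

definition compat_unit :: "('b::finite \<Rightarrow> 'b \<Rightarrow> 'b \<Rightarrow> 'a::comm_ring_1) \<Rightarrow> 'b set \<Rightarrow> bool" where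
  "compat_unit r U \<longleftrightarrow>
     (\<forall>x. amult r (\<lambda>c. if c \<in> U then 1 else 0) x = x \<and> amult r x (\<lambda>c. if c \<in> U then 1 else 0) = x)
   \<and> (\<forall>u\<in>U. \<forall>u'\<in>U. amult r (basis_elem u) (basis_elem u') = (if u = u' then basis_elem u else (\<lambda>_. 0)))
   \<and> (\<forall>b. \<exists>u\<in>U. \<exists>u'\<in>U. amult r (amult r (basis_elem u) (basis_elem b)) (basis_elem u') = basis_elem b)"

definition alg_elems :: "('b \<Rightarrow> int fls) set" where
  "alg_elems = {x. \<forall>b. laurent_poly (x b)}"

definition span_of :: "'b set \<Rightarrow> ('b \<Rightarrow> int fls) set" where
  "span_of K = {x \<in> alg_elems. \<forall>b. b \<notin> K \<longrightarrow> x b = 0}"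

definition two_sided_ideal :: "('b::finite \<Rightarrow> 'b \<Rightarrow> 'b \<Rightarrow> int fls) \<Rightarrow> ('b \<Rightarrow> int fls) set \<Rightarrow> bool" where
  "two_sided_ideal r S \<longleftrightarrow> S \<subseteq> alg_elems \<and> (\<lambda>_. 0) \<in> S \<and> (\<forall>x\<in>S. \<forall>y\<in>S. (\<lambda>b. x b + y b) \<in> S)
     \<and> (\<forall>c. laurent_poly c \<longrightarrow> (\<forall>x\<in>S. (\<lambda>b. c * x b) \<in> S))
     \<and> (\<forall>x\<in>S. \<forall>y\<in>alg_elems. amult r y x \<in> S \<and> amult r x y \<in> S)"

definition cell_le :: "('b::finite \<Rightarrow> 'b \<Rightarrow> 'b \<Rightarrow> int fls) \<Rightarrow> 'b \<Rightarrow> 'b \<Rightarrow> bool" where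
  "cell_le r b' b \<longleftrightarrow> (\<forall>K. b \<in> K \<and> two_sided_ideal r (span_of K) \<longrightarrow> b' \<in> K)"

definition cell_eq :: "('b::finite \<Rightarrow> 'b \<Rightarrow> 'b \<Rightarrow> int fls) \<Rightarrow> 'b \<Rightarrow> 'b \<Rightarrow> bool" where
  "cell_eq r b b' \<longleftrightarrow> cell_le r b b' \<and> cell_le r b' b"

definition cell_lt :: "('b::finite \<Rightarrow> 'b \<Rightarrow> 'b \<Rightarrow> int fls) \<Rightarrow> 'b \<Rightarrow> 'b \<Rightarrow> bool" where
  "cell_lt r b' b \<longleftrightarrow> cell_le r b' b \<and> \<not> cell_eq r b' b"

text \<open>v^-m f lies in Z[v^-1] iff all coefficients of positive powers of v vanish.\<close>

definition a_fun :: "('b::finite \<Rightarrow> 'b \<Rightarrow> 'b \<Rightarrow> int fls) \<Rightarrow> 'b \<Rightarrow> nat" where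
  "a_fun r b = (LEAST m. \<forall>b' b''. cell_eq r b' b \<and> cell_eq r b'' b \<longrightarrow>
       (\<forall>n>0. fls_nth (fls_X_inv ^ m * r b b' b'') n = 0))"

definition gamma :: "('b::finite \<Rightarrow> 'b \<Rightarrow> 'b \<Rightarrow> int fls) \<Rightarrow> 'b \<Rightarrow> 'b \<Rightarrow> 'b \<Rightarrow> int" where
  "gamma r b b' b'' = (if cell_eq r b b' \<and> cell_eq r b b''
      then fls_nth (fls_X_inv ^ a_fun r b * r b b' b'') 0 else 0)"

definition P1 :: "('b::finite \<Rightarrow> 'b \<Rightarrow> 'b \<Rightarrow> int fls) \<Rightarrow> bool" where
  "P1 r \<longleftrightarrow> (\<forall>b b'. cell_eq r b b' \<longrightarrow> a_fun r b = a_fun r b')"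

text \<open>P3, written coefficientwise in Z[v,v^-1,v',v'^-1] (coefficient of v^i v'^j).\<close>

definition P3 :: "('b::finite \<Rightarrow> 'b \<Rightarrow> 'b \<Rightarrow> int fls) \<Rightarrow> bool" where
  "P3 r \<longleftrightarrow> (\<forall>b1 b2 b3 b4. cell_eq r b2 b4 \<longrightarrow> (\<forall>i j.
     (\<Sum>\<beta>\<in>{\<beta>. cell_eq r \<beta> b2}. fls_nth (r b1 b2 \<beta>) i * fls_nth (r \<beta> b3 b4) j)
   = (\<Sum>\<beta>\<in>{\<beta>. cell_eq r \<beta> b2}. fls_nth (r b1 \<beta> b4) i * fls_nth (r b2 b3 \<beta>) j)))"

text \<open>Elements of A tensor A^infty: coefficient functions 'b => int fls (coefficient of t_b).\<close>

definition Phi :: "('b::finite \<Rightarrow> 'b \<Rightarrow> 'b \<Rightarrow> int fls) \<Rightarrow> 'b set \<Rightarrow> ('b \<Rightarrow> int fls) \<Rightarrow> ('b \<Rightarrow> int fls)" where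
  "Phi r D x = (\<lambda>b2. \<Sum>b\<in>UNIV. x b * (\<Sum>b1\<in>{b1 \<in> D. cell_eq r b1 b2}. r b b1 b2))"

definition act :: "('b::finite \<Rightarrow> 'b \<Rightarrow> 'b \<Rightarrow> int fls) \<Rightarrow> ('b \<Rightarrow> int fls) \<Rightarrow> ('b \<Rightarrow> int fls) \<Rightarrow> ('b \<Rightarrow> int fls)" where
  "act r c y = (\<lambda>b''. \<Sum>b\<in>UNIV. \<Sum>b'\<in>UNIV. c b * y b' * of_int (gamma r b b' b''))"

end

theory Submission imports Defs begin

text \<open>Write r(b',b,b'') for the coefficient of b'' in b'b, and fix b'' in the cell of b,
with a = a(b).  Since the distinguished elements sum to the unit of A^\<infinity>, the Kronecker
delta [\<beta> = b] equals \<Sum>_{d \<in> D} \<gamma>(d,b,\<beta>), whence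
  r(b',b,b'') = \<Sum>_{d \<in> D} \<Sum>_\<beta> r(b',\<beta>,b'') \<gamma>(d,b,\<beta>).
By P1 a nonzero \<gamma>(d,b,\<beta>) is the coefficient of v^a in r(d,b,\<beta>), so P3, read at the
coefficient of v'^a, moves the inner summation from the product to its first factor:
  r(b',b,b'') = \<Sum>_z (\<Sum>_{d \<in> D, d \<sim> z} r(b',d,z)) \<gamma>(z,b,b''),
which is the coefficient of b'' in \<Phi>(b') * b.  If b'' is not below b, both b'b and
\<Phi>(b') * b have zero b''-coefficient: an ideal spanned by basis elements that contains b
contains b'b, and \<gamma>(z,b,b'') \<noteq> 0 forces b'' \<sim> b.\<close>

lemma laurent_poly_iff_eventually:
  "laurent_poly f \<longleftrightarrow> (\<forall>\<^sub>F n in at_top. fls_nth f n = 0)"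
  by (simp add: laurent_poly_def eventually_at_top_linorder)

lemma laurent_poly_add: "laurent_poly f \<Longrightarrow> laurent_poly g \<Longrightarrow> laurent_poly (f + g)"
  unfolding laurent_poly_iff_eventually by (auto elim: eventually_elim2)

lemma laurent_poly_diff: "laurent_poly f \<Longrightarrow> laurent_poly g \<Longrightarrow> laurent_poly (f - g)"
  unfolding laurent_poly_iff_eventually by (auto elim: eventually_elim2)

lemma laurent_poly_zero [simp]: "laurent_poly 0"
  by (simp add: laurent_poly_def)

lemma laurent_poly_of_int [simp]: "laurent_poly (of_int k)"
  unfolding laurent_poly_def by (rule exI[of _ 1]) (simp add: fls_of_int_nth)

lemma laurent_poly_mult:
  assumes "laurent_poly f" "laurent_poly g"
  shows "laurent_poly (f * g)"
proof -
  obtain N where N: "\<And>n. n \<ge> N \<Longrightarrow> fls_nth f n = 0"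
    using assms(1) laurent_poly_def by blast
  obtain M where M: "\<And>n. n \<ge> M \<Longrightarrow> fls_nth g n = 0"
    using assms(2) laurent_poly_def by blast
  have "fls_nth (f * g) n = 0" if "n \<ge> N + M" for n
  proof -
    have "fls_nth f i * fls_nth g (n - i) = 0" for i
      using N[of i] M[of "n - i"] that by (cases "i \<ge> N") auto
    then show ?thesis
      by (simp add: fls_times_nth(2) sum.neutral)
  qed
  then show ?thesis
    unfolding laurent_poly_def by blast
qed

lemma laurent_poly_sum: "(\<And>x. x \<in> A \<Longrightarrow> laurent_poly (f x)) \<Longrightarrow> laurent_poly (\<Sum>x\<in>A. f x)"
  by (induction A rule: infinite_finite_induct) (auto intro: laurent_poly_add)

lemma cell_le_trans: "cell_le r a b \<Longrightarrow> cell_le r b c \<Longrightarrow> cell_le r a c"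
  by (simp add: cell_le_def)

lemma cell_eq_sym: "cell_eq r a b \<Longrightarrow> cell_eq r b a"
  by (simp add: cell_eq_def)

lemma cell_eq_trans: "cell_eq r a b \<Longrightarrow> cell_eq r b c \<Longrightarrow> cell_eq r a c"
  by (meson cell_eq_def cell_le_trans)

lemma amult_basis_elem_right:
  "amult r x (basis_elem b) b'' = (\<Sum>b'\<in>UNIV. x b' * r b' b b'')"
proof -
  have "x c * basis_elem b c' * r c c' b'' = (if c' = b then x c * r c b b'' else 0)" for c c'
    by (simp add: basis_elem_def)
  then show ?thesis
    by (simp add: amult_def)
qed

lemma amult_basis_elem: "amult r (basis_elem b') (basis_elem b) b'' = r b' b b''"
proof -
  have "basis_elem b' c * r c b b'' = (if c = b' then r b' b b'' else 0)" for c
    by (simp add: basis_elem_def)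
  then show ?thesis
    by (simp add: amult_basis_elem_right)
qed

lemma act_basis_elem_right:
  "act r c (basis_elem b) b'' = (\<Sum>z\<in>UNIV. c z * of_int (gamma r z b b''))"
proof -
  have "c z * basis_elem b c' * of_int (gamma r z c' b'') = (if c' = b then c z * of_int (gamma r z b b'') else 0)"
    for z c'
    by (simp add: basis_elem_def)
  then show ?thesis
    by (simp add: act_def)
qed

lemma basis_elem_in_alg_elems: "basis_elem b \<in> alg_elems"
  using laurent_poly_of_int[of 1] by (simp add: alg_elems_def basis_elem_def)

lemma basis_elem_in_span_of: "b \<in> K \<Longrightarrow> basis_elem b \<in> span_of K"
  using basis_elem_in_alg_elems by (auto simp: span_of_def basis_elem_def)

lemma structure_const_eq_0_if_not_cell_le:
  assumes "\<not> cell_le r b'' b"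
  shows "r b' b b'' = 0"
proof -
  obtain K where K: "b \<in> K" "two_sided_ideal r (span_of K)" "b'' \<notin> K"
    using assms unfolding cell_le_def by blast
  have left_ideal: "\<And>x y. x \<in> span_of K \<Longrightarrow> y \<in> alg_elems \<Longrightarrow> amult r y x \<in> span_of K"
    using K(2) unfolding two_sided_ideal_def by blast
  have "amult r (basis_elem b') (basis_elem b) \<in> span_of K"
    by (rule left_ideal[OF basis_elem_in_span_of[OF K(1)] basis_elem_in_alg_elems])
  then show ?thesis
    using K(3) by (simp add: span_of_def amult_basis_elem)
qed

lemma amult_basis_elem_in_alg_elems:
  assumes "\<forall>b b' b''. laurent_poly (r b b' b'')" and "x \<in> alg_elems"
  shows "amult r x (basis_elem b) \<in> alg_elems"
  using assms by (auto simp: alg_elems_def amult_basis_elem_right intro!: laurent_poly_sum laurent_poly_mult)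

lemma act_basis_elem_in_alg_elems:
  assumes "c \<in> alg_elems"
  shows "act r c (basis_elem b) \<in> alg_elems"
  using assms by (auto simp: alg_elems_def act_basis_elem_right intro!: laurent_poly_sum laurent_poly_mult)

lemma Phi_in_alg_elems:
  assumes "\<forall>b b' b''. laurent_poly (r b b' b'')" and "x \<in> alg_elems"
  shows "Phi r D x \<in> alg_elems"
  using assms by (auto simp: alg_elems_def Phi_def intro!: laurent_poly_sum laurent_poly_mult)

lemma compat_unit_sum_left:
  assumes "compat_unit s U"
  shows "(\<Sum>u\<in>U. s u b b'') = (if b'' = b then 1 else 0)"
proof -
  have "amult s (\<lambda>c. if c \<in> U then 1 else 0) (basis_elem b) b'' = basis_elem b b''"
    using assms unfolding compat_unit_def by metis
  then show ?thesis
    unfolding amult_basis_elem_right by (simp add: basis_elem_def flip: of_bool_def)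
qed

lemma gamma_eq_nth:
  "gamma r z b b'' =
     (if cell_eq r z b \<and> cell_eq r z b'' then fls_nth (r z b b'') (int (a_fun r z)) else 0)"
  by (simp add: gamma_def fls_X_inv_power_times_conv_shift)

lemma P3_nth_right:
  assumes "P3 r" and "cell_eq r b2 b4"
  shows "(\<Sum>\<beta>\<in>{\<beta>. cell_eq r \<beta> b2}. r b1 b2 \<beta> * of_int (fls_nth (r \<beta> b3 b4) j))
       = (\<Sum>\<beta>\<in>{\<beta>. cell_eq r \<beta> b2}. r b1 \<beta> b4 * of_int (fls_nth (r b2 b3 \<beta>) j))"
  using assms by (intro fls_eqI) (simp add: P3_def fls_nth_sum)

lemma sum_mult_gamma_exchange:
  assumes "P1 r" and "P3 r" and "cell_eq r b'' b"
  shows "(\<Sum>\<beta>\<in>UNIV. r b' \<beta> b'' * of_int (gamma r d b \<beta>))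
       = (\<Sum>\<beta>\<in>{\<beta>. cell_eq r \<beta> d}. r b' d \<beta> * of_int (gamma r \<beta> b b''))"
proof (cases "cell_eq r d b")
  case True
  have same_cell: "cell_eq r d \<beta> \<longleftrightarrow> cell_eq r \<beta> d" "cell_eq r \<beta> d \<longleftrightarrow> cell_eq r \<beta> b" for \<beta>
    using True cell_eq_sym cell_eq_trans by metis+
  have cell_b'': "cell_eq r \<beta> b'' \<longleftrightarrow> cell_eq r \<beta> b" for \<beta>
    using assms(3) cell_eq_sym cell_eq_trans by metis
  have a_fun_cell: "a_fun r \<beta> = a_fun r b" if "cell_eq r \<beta> b" for \<beta>
    using assms(1) that unfolding P1_def by blast
  have "(\<Sum>\<beta>\<in>UNIV. r b' \<beta> b'' * of_int (gamma r d b \<beta>))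
      = (\<Sum>\<beta>\<in>{\<beta>. cell_eq r \<beta> d}. r b' \<beta> b'' * of_int (fls_nth (r d b \<beta>) (a_fun r b)))"
    using True a_fun_cell[OF True]
    by (simp add: gamma_eq_nth same_cell(1) if_distrib sum.inter_filter[symmetric] cong: if_cong)
  also have "\<dots> = (\<Sum>\<beta>\<in>{\<beta>. cell_eq r \<beta> d}. r b' d \<beta> * of_int (fls_nth (r \<beta> b b'') (a_fun r b)))"
    using P3_nth_right[OF assms(2), of d b'' b' b "a_fun r b"] True cell_b'' by simp
  also have "\<dots> = (\<Sum>\<beta>\<in>{\<beta>. cell_eq r \<beta> d}. r b' d \<beta> * of_int (gamma r \<beta> b b''))"
    using a_fun_cell by (intro sum.cong) (auto simp: gamma_eq_nth same_cell(2) cell_b'')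
  finally show ?thesis .
next
  case False
  then have "\<not> cell_eq r \<beta> b" if "cell_eq r \<beta> d" for \<beta>
    using that cell_eq_sym cell_eq_trans by metis
  then show ?thesis
    using False by (simp add: gamma_eq_nth)
qed

lemma structure_const_eq_sum_distinguished:
  assumes "P1 r" and "compat_unit (gamma r) D" and "P3 r" and "cell_eq r b'' b"
  shows "r b' b b'' =
    (\<Sum>z\<in>UNIV. (\<Sum>d\<in>{d \<in> D. cell_eq r d z}. r b' d z) * of_int (gamma r z b b''))"
proof -
  have "r b' b b'' = (\<Sum>\<beta>\<in>UNIV. r b' \<beta> b'' * of_int (\<Sum>d\<in>D. gamma r d b \<beta>))"
    by (simp add: compat_unit_sum_left[OF assms(2)] flip: of_bool_def)
  also have "\<dots> = (\<Sum>d\<in>D. \<Sum>\<beta>\<in>UNIV. r b' \<beta> b'' * of_int (gamma r d b \<beta>))"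
    by (simp add: sum_distrib_left sum.swap[of _ D])
  also have "\<dots> = (\<Sum>d\<in>D. \<Sum>z\<in>{z. cell_eq r z d}. r b' d z * of_int (gamma r z b b''))"
    using sum_mult_gamma_exchange[OF assms(1,3,4)] by simp
  also have "\<dots> = (\<Sum>z\<in>UNIV. \<Sum>d\<in>{d \<in> D. cell_eq r z d}. r b' d z * of_int (gamma r z b b''))"
    using sum.swap_restrict[of D UNIV "\<lambda>d z. r b' d z * of_int (gamma r z b b'')" "\<lambda>d z. cell_eq r z d"]
    by simp
  also have "\<dots> = (\<Sum>z\<in>UNIV. (\<Sum>d\<in>{d \<in> D. cell_eq r d z}. r b' d z) * of_int (gamma r z b b''))"
  proof -
    have "{d \<in> D. cell_eq r z d} = {d \<in> D. cell_eq r d z}" for z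
      using cell_eq_sym by blast
    then show ?thesis
      by (simp add: sum_distrib_right)
  qed
  finally show ?thesis .
qed

lemma amult_basis_elem_eq_act_Phi_in_cell:
  assumes "P1 r" and "compat_unit (gamma r) D" and "P3 r" and "cell_eq r b'' b"
  shows "amult r x (basis_elem b) b'' = act r (Phi r D x) (basis_elem b) b''"
proof -
  define S where "S b' z = (\<Sum>d\<in>{d \<in> D. cell_eq r d z}. r b' d z)" for b' z
  have "amult r x (basis_elem b) b'' = (\<Sum>b'\<in>UNIV. x b' * (\<Sum>z\<in>UNIV. S b' z * of_int (gamma r z b b'')))"
    unfolding amult_basis_elem_right S_def structure_const_eq_sum_distinguished[OF assms] ..
  also have "\<dots> = (\<Sum>b'\<in>UNIV. \<Sum>z\<in>UNIV. x b' * S b' z * of_int (gamma r z b b''))"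
    by (simp add: sum_distrib_left mult.assoc)
  also have "\<dots> = (\<Sum>z\<in>UNIV. \<Sum>b'\<in>UNIV. x b' * S b' z * of_int (gamma r z b b''))"
    by (rule sum.swap)
  also have "\<dots> = act r (Phi r D x) (basis_elem b) b''"
    by (simp add: act_basis_elem_right Phi_def S_def sum_distrib_right)
  finally show ?thesis .
qed

lemma amult_basis_elem_eq_0_if_not_cell_le:
  "\<not> cell_le r b'' b \<Longrightarrow> amult r x (basis_elem b) b'' = 0"
  by (simp add: amult_basis_elem_right structure_const_eq_0_if_not_cell_le)

lemma act_basis_elem_eq_0_if_not_cell_eq:
  assumes "\<not> cell_eq r b'' b"
  shows "act r c (basis_elem b) b'' = 0"
proof -
  have "\<not> (cell_eq r z b \<and> cell_eq r z b'')" for z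
    using assms cell_eq_sym cell_eq_trans by metis
  then have "gamma r z b b'' = 0" for z
    unfolding gamma_def by (rule if_not_P)
  then show ?thesis
    by (simp add: act_basis_elem_right)
qed

theorem mainTheorem6:
  fixes r :: "'b::finite \<Rightarrow> 'b \<Rightarrow> 'b \<Rightarrow> int fls" and U D :: "'b set"
    and x :: "'b \<Rightarrow> int fls" and b :: 'b
  assumes coeffs: "\<forall>b b' b''. laurent_poly (r b b' b'')"
    and assoc: "assoc_alg r"
    and unit: "compat_unit r U"
    and P1: "P1 r"
    and P2: "compat_unit (gamma r) D"
    and P3: "P3 r"
    and x: "x \<in> alg_elems"
  shows "(\<lambda>b''. amult r x (basis_elem b) b'' - act r (Phi r D x) (basis_elem b) b'') \<in> span_of {b'. cell_lt r b' b}"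
proof -
  have "amult r x (basis_elem b) \<in> alg_elems"
    using coeffs x by (rule amult_basis_elem_in_alg_elems)
  moreover have "act r (Phi r D x) (basis_elem b) \<in> alg_elems"
    using Phi_in_alg_elems[OF coeffs x] by (rule act_basis_elem_in_alg_elems)
  ultimately have diff_in_alg_elems:
    "(\<lambda>b''. amult r x (basis_elem b) b'' - act r (Phi r D x) (basis_elem b) b'') \<in> alg_elems"
    by (simp add: alg_elems_def laurent_poly_diff)
  have "amult r x (basis_elem b) b'' = act r (Phi r D x) (basis_elem b) b''"
    if "\<not> cell_lt r b'' b" for b''
  proof (cases "cell_le r b'' b")
    case True
    with that have "cell_eq r b'' b"
      by (simp add: cell_lt_def)
    then show ?thesis
      by (rule amult_basis_elem_eq_act_Phi_in_cell[OF P1 P2 P3])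
  next
    case False
    then have "\<not> cell_eq r b'' b"
      by (simp add: cell_eq_def)
    with False show ?thesis
      by (simp add: amult_basis_elem_eq_0_if_not_cell_le act_basis_elem_eq_0_if_not_cell_eq)
  qed
  with diff_in_alg_elems show ?thesis
    by (simp add: span_of_def)
qed

end
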